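(* Fix $\beta_0\in\mathbb{R}$ and $\beta=(\beta_1,\dots,\beta_d)\in\mathbb{R}^d$ with $\|\beta\|\ne0$. Let $f:\mathbb{R}^d\to\mathbb{R}$ be defined by $f(x)=f_0(\varphi(x))$, where $f_0:\mathbb{R}\to\mathbb{R}$ and $\varphi(x)=\beta_0+\langle\beta,x\rangle$. Let $g(x,x')=g_0(\|x-x'\|)$ be a smooth growth function, let $x\in\mathbb{R}^d$, and let $(w^*,z^* )$ with $w^*\ne z^*$ be such that $B^*(x)=\frac{|f(w^* )-f(z^* )|}{\|w^*-z^*\|\,g(x,z^* )}$. Then there exist $a,c\in\mathbb{R}$ such that, with $z_c:=x+\frac{c}{\|\beta\|}\beta$ and $w_a:=z_c+\frac{a}{\|\beta\|}\beta$, one has $\frac{|f(w_a)-f(z_c)|}{\|w_a-z_c\|\,g(x,z_c)}\ge B^*(x)$.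
   Context: $\mathbb{R}^d$ carries the Euclidean norm $\|\cdot\|$. A smooth growth function is $g(x,x')=g_0(\|x-x'\|)$ with $g_0:\mathbb{R}_{\ge0}\to\mathbb{R}_{\ge1}$ monotonically increasing, $g_0(0)=1$, $g_0(r_1+r_2)\le g_0(r_1)g_0(r_2)$. $B^*(x)$ denotes the $g$-smooth sensitivity of $f$ at $x$. *)

theory Defs
  imports "HOL-Analysis.Analysis" "HOL-Library.Extended_Real"
begin

definition smooth_growth_fun :: "(real \<Rightarrow> real) \<Rightarrow> bool" where
  "smooth_growth_fun g0 \<longleftrightarrow>
     mono_on {0..} g0 \<and> (\<forall>r\<ge>0. g0 r \<ge> 1) \<and> g0 0 = 1 \<and>
     (\<forall>r1 r2. r1 \<ge> 0 \<longrightarrow> r2 \<ge> 0 \<longrightarrow> g0 (r1 + r2) \<le> g0 r1 * g0 r2)"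

definition growth_of :: "(real \<Rightarrow> real) \<Rightarrow> 'a::real_normed_vector \<Rightarrow> 'a \<Rightarrow> real" where
  "growth_of g0 x x' = g0 (norm (x - x'))"

text \<open>g-smooth sensitivity (valued in the extended reals, so that it may be infinite).\<close>
definition smooth_sens ::
  "('a::real_normed_vector \<Rightarrow> 'a \<Rightarrow> real) \<Rightarrow> ('a \<Rightarrow> real) \<Rightarrow> 'a \<Rightarrow> ereal" where
  "smooth_sens g f x =
     (SUP p \<in> {(w, z). w \<noteq> z}. ereal (\<bar>f (fst p) - f (snd p)\<bar> / (norm (fst p - snd p) * g x (snd p))))"

end

theory Submission
  imports Defs
begin

text \<open>Since \<open>f\<close> depends only on \<open>\<beta> \<bullet> y\<close>, the pair \<open>(w, z)\<close> can be replaced by its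
  orthogonal projection onto the line through \<open>x\<close> in direction \<open>\<beta>\<close>, moving \<open>z\<close> to
  \<open>z\<^sub>c\<close> and then \<open>w\<close> to \<open>w\<^sub>a\<close> along \<open>\<beta>\<close>. This leaves \<open>f w\<close> and \<open>f z\<close> unchanged, while
  by Cauchy-Schwarz it can only shrink \<open>\<parallel>w - z\<parallel>\<close> and \<open>\<parallel>x - z\<parallel>\<close>, hence (by monotonicity
  of \<open>g\<^sub>0\<close>) also \<open>g(x, z)\<close>. So the difference quotient does not decrease. If
  \<open>\<beta> \<bullet> (w - z) = 0\<close> the maximiser gives \<open>B\<^sup>*(x) = 0\<close> and any \<open>a \<noteq> 0\<close> works.\<close>

definition sens_quotient ::
  "('a::real_normed_vector \<Rightarrow> 'a \<Rightarrow> real) \<Rightarrow> ('a \<Rightarrow> real) \<Rightarrow> 'a \<Rightarrow> 'a \<Rightarrow> 'a \<Rightarrow> real" where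
  "sens_quotient g f x w z = \<bar>f w - f z\<bar> / (norm (w - z) * g x z)"

lemma smooth_growth_fun_pos: "smooth_growth_fun g0 \<Longrightarrow> 0 \<le> r \<Longrightarrow> 0 < g0 r"
  unfolding smooth_growth_fun_def by (meson less_le_trans zero_less_one)

lemma growth_of_pos: "smooth_growth_fun g0 \<Longrightarrow> 0 < growth_of g0 x y"
  unfolding growth_of_def by (simp add: smooth_growth_fun_pos)

lemma growth_of_mono:
  assumes "smooth_growth_fun g0" and "norm (x - y) \<le> norm (x - y')"
  shows "growth_of g0 x y \<le> growth_of g0 x y'"
  using assms unfolding smooth_growth_fun_def growth_of_def by (auto intro: mono_onD)

lemma sens_quotient_nonneg:
  "smooth_growth_fun g0 \<Longrightarrow> 0 \<le> sens_quotient (growth_of g0) f x w z"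
  unfolding sens_quotient_def by (simp add: growth_of_pos less_imp_le)

lemma inner_add_scaled_projection:
  fixes \<beta> :: "'a::real_inner"
  assumes "\<beta> \<noteq> 0"
  shows "\<beta> \<bullet> (y + (\<beta> \<bullet> v / norm \<beta> / norm \<beta>) *\<^sub>R \<beta>) = \<beta> \<bullet> (y + v)"
  using assms by (simp add: inner_add_right dot_square_norm power2_eq_square)

lemma abs_inner_div_norm_le:
  fixes \<beta> :: "'a::real_inner"
  shows "\<bar>\<beta> \<bullet> v\<bar> / norm \<beta> \<le> norm v"
  by (cases "\<beta> = 0") (simp_all add: divide_le_eq Cauchy_Schwarz_ineq2 mult.commute)

lemma sens_quotient_le_line_projection:
  fixes \<beta> :: "'a::real_inner" and f :: "'a \<Rightarrow> real" and x w z :: 'a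
  assumes ridge: "\<And>y. f y = f0 (\<beta>0 + \<beta> \<bullet> y)"
    and g0: "smooth_growth_fun g0"
    and \<beta>: "\<beta> \<noteq> 0"
    and wz: "\<beta> \<bullet> (w - z) \<noteq> 0"
  defines "c \<equiv> \<beta> \<bullet> (z - x) / norm \<beta>" and "a \<equiv> \<beta> \<bullet> (w - z) / norm \<beta>"
  defines "zc \<equiv> x + (c / norm \<beta>) *\<^sub>R \<beta>"
  defines "wa \<equiv> zc + (a / norm \<beta>) *\<^sub>R \<beta>"
  shows "sens_quotient (growth_of g0) f x w z \<le> sens_quotient (growth_of g0) f x wa zc"
proof -
  have "\<beta> \<bullet> zc = \<beta> \<bullet> z"
    using inner_add_scaled_projection[OF \<beta>, of x "z - x"] by (simp add: zc_def c_def)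
  moreover have "\<beta> \<bullet> wa = \<beta> \<bullet> w"
    using inner_add_scaled_projection[OF \<beta>, of zc "w - z"] calculation
    by (simp add: wa_def a_def inner_add_right inner_diff_right)
  ultimately have same_values: "f zc = f z" "f wa = f w"
    using ridge by simp_all
  have "norm (x - zc) = \<bar>c\<bar>"
    using \<beta> by (simp add: zc_def)
  also have "\<dots> \<le> norm (x - z)"
    using abs_inner_div_norm_le[of \<beta> "z - x"] by (simp add: c_def norm_minus_commute)
  finally have growth_le: "growth_of g0 x zc \<le> growth_of g0 x z"
    by (rule growth_of_mono[OF g0])
  have dist_eq: "norm (wa - zc) = \<bar>a\<bar>"
    using \<beta> by (simp add: wa_def)
  have dist_le: "\<bar>a\<bar> \<le> norm (w - z)"
    using abs_inner_div_norm_le[of \<beta> "w - z"] by (simp add: a_def)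
  have "0 < \<bar>a\<bar> * growth_of g0 x zc"
    using wz \<beta> growth_of_pos[OF g0, of x zc] by (simp add: a_def)
  then show ?thesis
    unfolding sens_quotient_def same_values dist_eq
    by (intro frac_le mult_mono dist_le growth_le) (auto simp: growth_of_pos[OF g0] less_imp_le)
qed

theorem mainTheorem14:
  fixes \<beta>0 :: real and \<beta> :: "'a::euclidean_space" and f0 :: "real \<Rightarrow> real"
    and g0 :: "real \<Rightarrow> real" and f :: "'a \<Rightarrow> real" and x w z :: 'a
  assumes "norm \<beta> \<noteq> 0"
    and "\<And>y. f y = f0 (\<beta>0 + \<beta> \<bullet> y)"
    and "smooth_growth_fun g0"
    and "w \<noteq> z"
    and "smooth_sens (growth_of g0) f x =
           ereal (\<bar>f w - f z\<bar> / (norm (w - z) * growth_of g0 x z))"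
  shows "\<exists>a c :: real. a \<noteq> 0 \<and>
     (let zc = x + (c / norm \<beta>) *\<^sub>R \<beta>; wa = zc + (a / norm \<beta>) *\<^sub>R \<beta>
      in ereal (\<bar>f wa - f zc\<bar> / (norm (wa - zc) * growth_of g0 x zc))
         \<ge> smooth_sens (growth_of g0) f x)"
proof -
  have \<beta>: "\<beta> \<noteq> 0" using assms(1) by simp
  have B: "smooth_sens (growth_of g0) f x = ereal (sens_quotient (growth_of g0) f x w z)"
    using assms(5) by (simp add: sens_quotient_def)
  show ?thesis
  proof (cases "\<beta> \<bullet> (w - z) = 0")
    case True
    then have "sens_quotient (growth_of g0) f x w z = 0"
      using assms(2) by (simp add: sens_quotient_def inner_diff_right)
    with B have "smooth_sens (growth_of g0) f x = 0"
      by (simp add: zero_ereal_def)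
    then show ?thesis
      unfolding Let_def sens_quotient_def[symmetric]
      using sens_quotient_nonneg[OF assms(3)] by (intro exI[of _ 1] exI[of _ 0]) simp
  next
    case False
    then show ?thesis
      unfolding Let_def sens_quotient_def[symmetric]
      using sens_quotient_le_line_projection[where ?f0.0 = f0 and ?\<beta>0.0 = \<beta>0,
          OF assms(2,3) \<beta> False] B \<beta>
      by (intro exI[of _ "\<beta> \<bullet> (w - z) / norm \<beta>"] exI[of _ "\<beta> \<bullet> (z - x) / norm \<beta>"]) simp
  qed
qed

end
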